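(* Let $d$ be a positive integer and let $K \le k \le d$ be non-negative integers. Let $\mathbf{b} \in \mathbb{R}^d$ be an arbitrary vector and let $\mathbf{a} \in \mathbb{R}^d$ be any $K$-sparse vector (i.e. $\mathbf{a}$ has at most $K$ non-zero entries). Define $$\rho = \frac{\min\{K, d-k\}}{k - K + \min\{K, d-k\}}, \qquad \nu = 1 + \frac{\rho + \sqrt{(4+\rho)\rho}}{2}.$$ Then $$\|\mathcal{H}_k(\mathbf{b}) - \mathbf{a}\|_2 \le \sqrt{\nu}\, \|\mathbf{b} - \mathbf{a}\|_2 .$$ Moreover, the bound is tight: there exist vectors $\mathbf{b}$ and $K$-sparse $\mathbf{a}$ for which equality holds.
   Context: For $\mathbf{v} \in \mathbb{R}^d$, the hard thresholding operator $\mathcal{H}_k(\mathbf{v})$ is the vector obtained from $\mathbf{v}$ by keeping its $k$ entries of largest absolute value and setting all other entries to zero (ties broken lexicographically). Thus $\mathcal{H}_k(\mathbf{v})$ is $k$-sparse. *)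

theory Defs
  imports Complex_Main
begin

text \<open>Vectors in R^d are represented as functions nat => real; only the
entries with index i < d matter.\<close>

definition l2norm :: "nat \<Rightarrow> (nat \<Rightarrow> real) \<Rightarrow> real" where
  "l2norm d v = sqrt (\<Sum>i<d. (v i)^2)"

definition is_sparse :: "nat \<Rightarrow> nat \<Rightarrow> (nat \<Rightarrow> real) \<Rightarrow> bool" where
  "is_sparse d K a \<longleftrightarrow> card {i. i < d \<and> a i \<noteq> 0} \<le> K"

definition hard_threshold :: "nat \<Rightarrow> nat \<Rightarrow> (nat \<Rightarrow> real) \<Rightarrow> (nat \<Rightarrow> real)" where
  "hard_threshold d k v = (\<lambda>i. if i < d \<and>
       card {j. j < d \<and> (\<bar>v j\<bar> > \<bar>v i\<bar> \<or> (\<bar>v j\<bar> = \<bar>v i\<bar> \<and> j < i))} < k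
     then v i else 0)"

definition ht_rho :: "nat \<Rightarrow> nat \<Rightarrow> nat \<Rightarrow> real" where
  "ht_rho d K k = real (min K (d - k)) / real (k - K + min K (d - k))"

definition ht_nu :: "nat \<Rightarrow> nat \<Rightarrow> nat \<Rightarrow> real" where
  "ht_nu d K k = 1 + (ht_rho d K k + sqrt ((4 + ht_rho d K k) * ht_rho d K k)) / 2"

end

theory Submission
  imports Defs
begin

text \<open>Let \<open>S\<close> be the indices kept by \<open>H\<^sub>k\<close>, \<open>U\<close> the discarded indices in the support
  of \<open>a\<close>, and \<open>x = \<nu> - 1\<close>, so that \<open>x\<^sup>2 = \<rho> (1 + x)\<close>. The error of \<open>H\<^sub>k(b)\<close> is the
  error \<open>A\<close> of \<open>b\<close> on \<open>S\<close> plus the energy of \<open>a\<close> on \<open>U\<close>. The entries of \<open>b\<close> on \<open>S\<close>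
  dominate those on \<open>U\<close>, and at least \<open>k - K + |U|\<close> indices of \<open>S\<close> lie off the support of
  \<open>a\<close>, where \<open>A\<close> contains the full energy of \<open>b\<close>; as \<open>|U| \<le> min K (d - k)\<close>, this gives
  \<open>\<Sum>\<^sub>U b\<^sup>2 \<le> \<rho> A\<close>. Splitting \<open>a = (a - b) + b\<close> on \<open>U\<close> with
  \<open>(u + v)\<^sup>2 \<le> (1 + x) u\<^sup>2 + (1 + 1/x) v\<^sup>2\<close> then gives
  \<open>\<Sum>\<^sub>U a\<^sup>2 \<le> (1 + x) \<Sum>\<^sub>U (b - a)\<^sup>2 + x A\<close>, and the bound follows.
  Every step is tight when \<open>b\<close> is the indicator of the first \<open>k + min K (d - k)\<close> indices
  and \<open>a\<close> is \<open>1\<close> on the first \<open>K - min K (d - k)\<close> of them and \<open>\<nu> / (\<nu> - 1)\<close> on the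
  discarded ones.\<close>

definition ht_precedes :: "(nat \<Rightarrow> real) \<Rightarrow> nat \<Rightarrow> nat \<Rightarrow> bool" where
  "ht_precedes b j i \<longleftrightarrow> \<bar>b j\<bar> > \<bar>b i\<bar> \<or> (\<bar>b j\<bar> = \<bar>b i\<bar> \<and> j < i)"

definition ht_rank :: "nat \<Rightarrow> (nat \<Rightarrow> real) \<Rightarrow> nat \<Rightarrow> nat" where
  "ht_rank d b i = card {j. j < d \<and> ht_precedes b j i}"

definition ht_kept :: "nat \<Rightarrow> nat \<Rightarrow> (nat \<Rightarrow> real) \<Rightarrow> nat set" where
  "ht_kept d k b = {i. i < d \<and> ht_rank d b i < k}"

lemma hard_threshold_eq: "hard_threshold d k b i = (if i \<in> ht_kept d k b then b i else 0)"
  by (simp add: hard_threshold_def ht_kept_def ht_rank_def ht_precedes_def)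

lemma ht_kept_subset: "ht_kept d k b \<subseteq> {..<d}"
  by (auto simp: ht_kept_def)

subsection \<open>Ranks\<close>

lemma ht_precedes_trans: "ht_precedes b l j \<Longrightarrow> ht_precedes b j i \<Longrightarrow> ht_precedes b l i"
  unfolding ht_precedes_def by auto

lemma ht_precedes_irrefl: "\<not> ht_precedes b i i"
  unfolding ht_precedes_def by auto

lemma ht_precedes_total: "i \<noteq> j \<Longrightarrow> ht_precedes b j i \<or> ht_precedes b i j"
  unfolding ht_precedes_def by auto

lemma ht_rank_strict_mono:
  assumes "j < d" "ht_precedes b j i"
  shows "ht_rank d b j < ht_rank d b i"
proof -
  have "j \<notin> {l. l < d \<and> ht_precedes b l j}"
    using ht_precedes_irrefl by blast
  then have "Suc (ht_rank d b j) = card (insert j {l. l < d \<and> ht_precedes b l j})"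
    by (simp add: ht_rank_def)
  also have "\<dots> \<le> ht_rank d b i"
    unfolding ht_rank_def using assms ht_precedes_trans by (intro card_mono) auto
  finally show ?thesis by simp
qed

lemma inj_on_ht_rank: "inj_on (ht_rank d b) {..<d}"
proof (rule inj_onI)
  fix i j assume "i \<in> {..<d}" "j \<in> {..<d}" "ht_rank d b i = ht_rank d b j"
  then show "i = j"
    using ht_precedes_total[of i j b] ht_rank_strict_mono[of j d b i] ht_rank_strict_mono[of i d b j]
    by fastforce
qed

lemma ht_rank_less: "i < d \<Longrightarrow> ht_rank d b i < d"
proof -
  assume "i < d"
  have "ht_rank d b i \<le> card ({..<d} - {i})"
    unfolding ht_rank_def using ht_precedes_irrefl by (intro card_mono) auto
  then show ?thesis using \<open>i < d\<close> by simp
qed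

lemma card_ht_discarded_le:
  assumes "k \<le> d"
  shows "card ({..<d} - ht_kept d k b) \<le> d - k"
proof -
  have "card ({..<d} - ht_kept d k b) \<le> card {k..<d}"
  proof (rule card_inj_on_le)
    show "inj_on (ht_rank d b) ({..<d} - ht_kept d k b)"
      by (rule inj_on_subset[OF inj_on_ht_rank]) auto
    show "ht_rank d b ` ({..<d} - ht_kept d k b) \<subseteq> {k..<d}"
      using ht_rank_less by (auto simp: ht_kept_def)
  qed simp
  then show ?thesis by simp
qed

lemma card_ht_kept_ge:
  assumes "k \<le> d"
  shows "k \<le> card (ht_kept d k b)"
proof -
  have "d = card (ht_kept d k b) + card ({..<d} - ht_kept d k b)"
    using card_Int_Diff[of "{..<d}" "ht_kept d k b"] ht_kept_subset[of d k b] by (simp add: Int_absorb1)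
  then show ?thesis using card_ht_discarded_le[OF assms, of b] assms by linarith
qed

lemma ht_kept_dominates:
  assumes "i \<in> ht_kept d k b" "j \<in> {..<d} - ht_kept d k b"
  shows "(b j)\<^sup>2 \<le> (b i)\<^sup>2"
proof (rule ccontr)
  assume "\<not> ?thesis"
  then have "ht_precedes b j i"
    unfolding ht_precedes_def by (metis abs_le_square_iff not_le)
  then have "ht_rank d b j < ht_rank d b i"
    using assms by (intro ht_rank_strict_mono) auto
  then show False using assms by (auto simp: ht_kept_def)
qed

subsection \<open>The constants \<open>\<rho>\<close> and \<open>\<nu>\<close>\<close>

lemma ht_rho_nonneg: "0 \<le> ht_rho d K k"
  by (simp add: ht_rho_def)

lemma ht_rho_pos:
  assumes "K \<le> k" "0 < min K (d - k)"
  shows "0 < ht_rho d K k"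
  unfolding ht_rho_def using assms by (intro divide_pos_pos) auto

lemma ht_rho_bound:
  assumes "K \<le> k" "m \<le> min K (d - k)"
  shows "real m \<le> ht_rho d K k * real (k - K + m)"
proof (cases "min K (d - k) = 0")
  case True
  then show ?thesis using assms ht_rho_nonneg[of d K k] by simp
next
  case False
  define M where "M = min K (d - k)"
  have "real m * real (k - K + M) \<le> real M * real (k - K + m)"
  proof -
    have "real M * real (k - K + m) - real m * real (k - K + M) = (real M - real m) * real (k - K)"
      by (simp add: algebra_simps)
    also have "\<dots> \<ge> 0" using assms by (simp add: M_def)
    finally show ?thesis by simp
  qed
  moreover have "0 < real (k - K + M)" using False by (simp add: M_def del: of_nat_add)
  ultimately show ?thesis
    by (simp add: ht_rho_def M_def[symmetric] field_simps)
qed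

lemma ht_nu_sq: "(ht_nu d K k - 1)\<^sup>2 = ht_rho d K k * ht_nu d K k"
proof -
  define \<rho> where "\<rho> = ht_rho d K k"
  have "(sqrt ((4 + \<rho>) * \<rho>))\<^sup>2 = (4 + \<rho>) * \<rho>"
    using ht_rho_nonneg[of d K k] by (simp add: \<rho>_def)
  then show ?thesis
    unfolding ht_nu_def \<rho>_def[symmetric] by (simp add: power2_eq_square algebra_simps)
qed

lemma ht_nu_ge_one: "1 \<le> ht_nu d K k"
  using ht_rho_nonneg[of d K k] by (simp add: ht_nu_def)

lemma ht_nu_gt_one: "0 < ht_rho d K k \<Longrightarrow> 1 < ht_nu d K k"
  by (simp add: ht_nu_def add_pos_nonneg)

lemma ht_nu_excess_eq:
  assumes "0 < ht_rho d K k"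
  shows "(1 + 1 / (ht_nu d K k - 1)) * ht_rho d K k = ht_nu d K k - 1"
proof -
  have "0 < ht_nu d K k - 1" using ht_nu_gt_one[OF assms] by simp
  then show ?thesis
    using ht_nu_sq[of d K k] by (simp add: field_simps power2_eq_square)
qed

subsection \<open>The error bound\<close>

lemma sq_sum_le_weighted:
  fixes u v t :: real
  assumes "0 < t"
  shows "(u + v)\<^sup>2 \<le> (1 + t) * u\<^sup>2 + (1 + 1 / t) * v\<^sup>2"
proof -
  have "t * ((1 + t) * u\<^sup>2 + (1 + 1 / t) * v\<^sup>2 - (u + v)\<^sup>2) = (t * u - v)\<^sup>2"
    using assms by (simp add: field_simps power2_eq_square)
  then have "0 \<le> t * ((1 + t) * u\<^sup>2 + (1 + 1 / t) * v\<^sup>2 - (u + v)\<^sup>2)" by simp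
  then show ?thesis using assms by (simp add: zero_le_mult_iff)
qed

lemma card_kept_off_support_ge:
  fixes a b :: "nat \<Rightarrow> real"
  assumes "is_sparse d K a" "k \<le> d"
  defines "S \<equiv> ht_kept d k b" and "T \<equiv> {i. i < d \<and> a i \<noteq> 0}"
  shows "k + card (({..<d} - S) \<inter> T) \<le> K + card (S - T)"
proof -
  have fin: "finite S" "finite T"
    by (auto simp: S_def T_def ht_kept_def)
  have "card S = card (S \<inter> T) + card (S - T)"
    using fin(1) by (rule card_Int_Diff)
  moreover have "card (S \<inter> T) + card (({..<d} - S) \<inter> T) \<le> K"
  proof -
    have "card (S \<inter> T) + card (({..<d} - S) \<inter> T) = card ((S \<inter> T) \<union> (({..<d} - S) \<inter> T))"
      using fin by (intro card_Un_disjoint[symmetric]) auto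
    also have "\<dots> \<le> card T" using fin by (intro card_mono) auto
    finally show ?thesis using assms(1) by (simp add: is_sparse_def T_def)
  qed
  ultimately show ?thesis
    using card_ht_kept_ge[OF assms(2), of b] by (simp add: S_def)
qed

lemma card_discarded_support_le:
  fixes a b :: "nat \<Rightarrow> real"
  assumes "is_sparse d K a" "k \<le> d"
  shows "card (({..<d} - ht_kept d k b) \<inter> {i. i < d \<and> a i \<noteq> 0}) \<le> min K (d - k)"
proof -
  have "card (({..<d} - ht_kept d k b) \<inter> {i. i < d \<and> a i \<noteq> 0}) \<le> card {i. i < d \<and> a i \<noteq> 0}"
    by (intro card_mono) auto
  moreover have "card (({..<d} - ht_kept d k b) \<inter> {i. i < d \<and> a i \<noteq> 0}) \<le> card ({..<d} - ht_kept d k b)"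
    by (intro card_mono) auto
  ultimately show ?thesis
    using assms card_ht_discarded_le[OF assms(2), of b] by (simp add: is_sparse_def)
qed

lemma ht_discarded_energy_le:
  fixes a b :: "nat \<Rightarrow> real"
  assumes "is_sparse d K a" "K \<le> k" "k \<le> d"
  defines "S \<equiv> ht_kept d k b" and "T \<equiv> {i. i < d \<and> a i \<noteq> 0}"
  shows "(\<Sum>i\<in>({..<d} - S) \<inter> T. (b i)\<^sup>2) \<le> ht_rho d K k * (\<Sum>i\<in>S. (b i - a i)\<^sup>2)"
proof (cases "({..<d} - S) \<inter> T = {}")
  case True
  then show ?thesis
    using ht_rho_nonneg[of d K k] by (simp add: sum_nonneg)
next
  case False
  define U where "U = ({..<d} - S) \<inter> T"
  define \<rho> where "\<rho> = ht_rho d K k"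
  have fin: "finite U" "finite S"
    by (auto simp: U_def S_def ht_kept_def)
  define \<beta> where "\<beta> = Max ((\<lambda>j. (b j)\<^sup>2) ` U)"
  have "\<beta> \<in> (\<lambda>j. (b j)\<^sup>2) ` U"
    unfolding \<beta>_def using fin False by (intro Max_in) (auto simp: U_def)
  then obtain j0 where j0: "j0 \<in> U" "(b j0)\<^sup>2 = \<beta>" by auto
  have \<beta>_nonneg: "0 \<le> \<beta>" using j0 by (metis zero_le_power2)
  have \<rho>_nonneg: "0 \<le> \<rho>" by (simp add: \<rho>_def ht_rho_nonneg)
  have card_U: "card U \<le> min K (d - k)"
    using card_discarded_support_le[OF assms(1,3)] by (simp add: U_def S_def T_def)
  have card_off: "k - K + card U \<le> card (S - T)"
    using card_kept_off_support_ge[OF assms(1,3), of b] assms(2) by (simp add: U_def S_def T_def)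
  have "(\<Sum>i\<in>U. (b i)\<^sup>2) \<le> real (card U) * \<beta>"
    using sum_bounded_above[of U "\<lambda>j. (b j)\<^sup>2" \<beta>] fin by (simp add: \<beta>_def)
  also have "\<dots> \<le> \<rho> * real (k - K + card U) * \<beta>"
    using ht_rho_bound[OF assms(2) card_U] \<beta>_nonneg by (simp add: \<rho>_def mult_right_mono)
  also have "\<dots> \<le> \<rho> * real (card (S - T)) * \<beta>"
    using card_off \<rho>_nonneg \<beta>_nonneg by (simp add: mult_left_mono mult_right_mono)
  also have "\<dots> \<le> \<rho> * (\<Sum>i\<in>S - T. (b i)\<^sup>2)"
  proof -
    have "\<beta> \<le> (b i)\<^sup>2" if "i \<in> S" for i
      using ht_kept_dominates[of i d k b j0] that j0 by (auto simp: S_def U_def)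
    then have "real (card (S - T)) * \<beta> \<le> (\<Sum>i\<in>S - T. (b i)\<^sup>2)"
      using sum_bounded_below[of "S - T" \<beta> "\<lambda>i. (b i)\<^sup>2"] by simp
    then show ?thesis using \<rho>_nonneg by (simp add: mult.assoc mult_left_mono)
  qed
  also have "\<dots> = \<rho> * (\<Sum>i\<in>S - T. (b i - a i)\<^sup>2)"
    using ht_kept_subset[of d k b] by (intro arg_cong[where f="(*) \<rho>"] sum.cong) (auto simp: S_def T_def)
  also have "\<dots> \<le> \<rho> * (\<Sum>i\<in>S. (b i - a i)\<^sup>2)"
    using fin \<rho>_nonneg by (intro mult_left_mono sum_mono2) auto
  finally show ?thesis by (simp add: U_def \<rho>_def)
qed

lemma ht_sq_error_le:
  fixes a b :: "nat \<Rightarrow> real"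
  assumes "is_sparse d K a" "K \<le> k" "k \<le> d"
  shows "(\<Sum>i<d. (hard_threshold d k b i - a i)\<^sup>2) \<le> ht_nu d K k * (\<Sum>i<d. (b i - a i)\<^sup>2)"
proof -
  define S where "S = ht_kept d k b"
  define T where "T = {i. i < d \<and> a i \<noteq> 0}"
  define U where "U = ({..<d} - S) \<inter> T"
  define A where "A = (\<Sum>i\<in>S. (b i - a i)\<^sup>2)"
  define Q where "Q = (\<Sum>i\<in>U. (b i - a i)\<^sup>2)"
  define \<nu> where "\<nu> = ht_nu d K k"
  have S_sub: "S \<subseteq> {..<d}" by (simp add: S_def ht_kept_subset)
  have U_sub: "U \<subseteq> {..<d} - S" by (auto simp: U_def)
  have A_nonneg: "0 \<le> A" and Q_nonneg: "0 \<le> Q" by (auto simp: A_def Q_def sum_nonneg)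
  have err: "(\<Sum>i<d. (hard_threshold d k b i - a i)\<^sup>2) = A + (\<Sum>i\<in>U. (a i)\<^sup>2)"
  proof -
    have "(\<Sum>i<d. (hard_threshold d k b i - a i)\<^sup>2)
        = (\<Sum>i\<in>{..<d} - S. (hard_threshold d k b i - a i)\<^sup>2) + (\<Sum>i\<in>S. (hard_threshold d k b i - a i)\<^sup>2)"
      using S_sub by (simp add: sum.subset_diff)
    also have "(\<Sum>i\<in>S. (hard_threshold d k b i - a i)\<^sup>2) = A"
      unfolding A_def by (intro sum.cong) (auto simp: hard_threshold_eq S_def)
    also have "(\<Sum>i\<in>{..<d} - S. (hard_threshold d k b i - a i)\<^sup>2) = (\<Sum>i\<in>U. (a i)\<^sup>2)"
      using U_sub by (intro sum.mono_neutral_cong_right) (auto simp: hard_threshold_eq S_def U_def T_def)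
    finally show ?thesis by simp
  qed
  have res: "A + Q \<le> (\<Sum>i<d. (b i - a i)\<^sup>2)"
  proof -
    have "Q \<le> (\<Sum>i\<in>{..<d} - S. (b i - a i)\<^sup>2)"
      unfolding Q_def using U_sub by (intro sum_mono2) auto
    moreover have "(\<Sum>i<d. (b i - a i)\<^sup>2) = (\<Sum>i\<in>{..<d} - S. (b i - a i)\<^sup>2) + A"
      using S_sub by (simp add: A_def sum.subset_diff)
    ultimately show ?thesis by simp
  qed
  have "(\<Sum>i\<in>U. (a i)\<^sup>2) \<le> \<nu> * Q + (\<nu> - 1) * A"
  proof (cases "U = {}")
    case True
    then show ?thesis
      using ht_nu_ge_one[of d K k] A_nonneg Q_nonneg by (simp add: \<nu>_def Q_def)
  next
    case False
    then have "0 < card U" by (simp add: U_def card_gt_0_iff)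
    then have "0 < ht_rho d K k"
      using card_discarded_support_le[OF assms(1,3), of b] assms(2)
      by (intro ht_rho_pos) (auto simp: U_def S_def T_def)
    note excess = ht_nu_excess_eq[OF this] and gt_one = ht_nu_gt_one[OF this]
    have "(\<Sum>i\<in>U. (a i)\<^sup>2) \<le> (\<Sum>i\<in>U. \<nu> * (b i - a i)\<^sup>2 + (1 + 1 / (\<nu> - 1)) * (b i)\<^sup>2)"
    proof (rule sum_mono)
      fix i
      show "(a i)\<^sup>2 \<le> \<nu> * (b i - a i)\<^sup>2 + (1 + 1 / (\<nu> - 1)) * (b i)\<^sup>2"
        using sq_sum_le_weighted[of "\<nu> - 1" "a i - b i" "b i"] gt_one
        by (simp add: \<nu>_def power2_commute)
    qed
    also have "\<dots> = \<nu> * Q + (1 + 1 / (\<nu> - 1)) * (\<Sum>i\<in>U. (b i)\<^sup>2)"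
      by (simp add: Q_def sum.distrib sum_distrib_left)
    also have "\<dots> \<le> \<nu> * Q + (1 + 1 / (\<nu> - 1)) * (ht_rho d K k * A)"
      using ht_discarded_energy_le[OF assms, of b] gt_one
      by (intro add_left_mono mult_left_mono) (simp_all add: A_def U_def S_def T_def \<nu>_def)
    also have "\<dots> = \<nu> * Q + (\<nu> - 1) * A"
      using excess by (simp add: \<nu>_def mult.assoc[symmetric])
    finally show ?thesis .
  qed
  then have "(\<Sum>i<d. (hard_threshold d k b i - a i)\<^sup>2) \<le> \<nu> * (A + Q)"
    unfolding err by (simp add: algebra_simps)
  also have "\<dots> \<le> \<nu> * (\<Sum>i<d. (b i - a i)\<^sup>2)"
    using res ht_nu_ge_one[of d K k] by (simp add: \<nu>_def)
  finally show ?thesis by (simp add: \<nu>_def)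
qed

subsection \<open>Tightness\<close>

lemma hard_threshold_indicator_lessThan:
  assumes "n \<le> d"
  shows "hard_threshold d k (\<lambda>i. if i < n then 1 else 0) = (\<lambda>i. if i < min k n then 1 else 0)"
proof
  fix i
  define b :: "nat \<Rightarrow> real" where "b = (\<lambda>i. if i < n then 1 else 0)"
  have "ht_rank d b i = i" if "i < n"
  proof -
    have "{j. j < d \<and> ht_precedes b j i} = {..<i}"
      using that assms by (auto simp: ht_precedes_def b_def)
    then show ?thesis by (simp add: ht_rank_def)
  qed
  then show "hard_threshold d k b i = (if i < min k n then 1 else 0)"
    using assms by (auto simp: hard_threshold_eq ht_kept_def b_def)
qed

lemma sum_if_mem_const:
  fixes c :: real and d :: nat
  assumes "I \<subseteq> {..<d}"
  shows "(\<Sum>i<d. if i \<in> I then c else 0) = c * real (card I)"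
proof -
  have "(\<Sum>i<d. if i \<in> I then c else 0) = (\<Sum>i\<in>{..<d} \<inter> I. c)"
    by (rule sum.inter_restrict[symmetric]) simp
  also have "{..<d} \<inter> I = I" using assms by auto
  finally show ?thesis by simp
qed

lemma ht_bound_attained_nu_one:
  assumes "0 < d" "0 < k" "min K (d - k) = 0"
  shows "\<exists>a b. is_sparse d K a \<and> (\<exists>i<d. b i \<noteq> a i) \<and>
            l2norm d (\<lambda>i. hard_threshold d k b i - a i)
              = sqrt (ht_nu d K k) * l2norm d (\<lambda>i. b i - a i)"
proof -
  define b :: "nat \<Rightarrow> real" where "b = (\<lambda>i. if i < 1 then 1 else 0)"
  have "hard_threshold d k b = b"
    using hard_threshold_indicator_lessThan[of 1 d k] assms by (simp add: b_def)
  moreover have "ht_nu d K k = 1"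
    using assms(3) by (simp add: ht_nu_def ht_rho_def)
  ultimately have "l2norm d (\<lambda>i. hard_threshold d k b i - 0) = sqrt (ht_nu d K k) * l2norm d (\<lambda>i. b i - 0)"
    by simp
  moreover have "is_sparse d K (\<lambda>i. 0)" by (simp add: is_sparse_def)
  moreover have "b 0 \<noteq> 0" by (simp add: b_def)
  ultimately show ?thesis using assms(1) by blast
qed

lemma ht_bound_attained_nu_gt_one:
  assumes "K \<le> k" "k \<le> d" "0 < min K (d - k)"
  shows "\<exists>a b. is_sparse d K a \<and> (\<exists>i<d. b i \<noteq> a i) \<and>
            l2norm d (\<lambda>i. hard_threshold d k b i - a i)
              = sqrt (ht_nu d K k) * l2norm d (\<lambda>i. b i - a i)"
proof -
  define M where "M = min K (d - k)"
  have M: "0 < M" "M \<le> K" "k + M \<le> d" using assms by (auto simp: M_def)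
  define N where "N = real (k - K + M)"
  define t where "t = ht_nu d K k - 1"
  have \<rho>: "ht_rho d K k = real M / N" by (simp add: ht_rho_def M_def N_def)
  have "0 < ht_rho d K k" using assms by (intro ht_rho_pos)
  then have N_pos: "0 < N" and t_pos: "0 < t"
    using \<rho> ht_nu_gt_one M(1) by (auto simp: t_def N_def zero_less_divide_iff)
  define \<alpha> where "\<alpha> = (1 + t) / t"
  define a :: "nat \<Rightarrow> real" where
    "a = (\<lambda>i. if i < K - M then 1 else if k \<le> i \<and> i < k + M then \<alpha> else 0)"
  define b :: "nat \<Rightarrow> real" where "b = (\<lambda>i. if i < k + M then 1 else 0)"
  have H: "hard_threshold d k b i = (if i < k then 1 else 0)" for i
    using hard_threshold_indicator_lessThan[OF M(3), of k] by (simp add: b_def)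
  have sparse: "is_sparse d K a"
  proof -
    have "card {i. i < d \<and> a i \<noteq> 0} \<le> card ({..<K - M} \<union> {k..<k + M})"
      by (intro card_mono) (auto simp: a_def)
    also have "\<dots> \<le> card {..<K - M} + card {k..<k + M}" by (rule card_Un_le)
    finally show ?thesis using M by (simp add: is_sparse_def)
  qed
  have witness: "K - M < d" "b (K - M) \<noteq> a (K - M)"
    using M assms by (auto simp: a_def b_def)
  have sub: "{K - M..<k} \<subseteq> {..<d}" "{k..<k + M} \<subseteq> {..<d}" using M assms by auto
  have card_I: "real (card {K - M..<k}) = N" using M assms by (simp add: N_def)
  have err: "(\<Sum>i<d. (hard_threshold d k b i - a i)\<^sup>2) = N + real M * \<alpha>\<^sup>2"
  proof -
    have "(\<Sum>i<d. (hard_threshold d k b i - a i)\<^sup>2) =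
        (\<Sum>i<d. (if i \<in> {K - M..<k} then 1 else 0) + (if i \<in> {k..<k + M} then \<alpha>\<^sup>2 else 0))"
      using M assms(1) by (intro sum.cong) (auto simp: H a_def)
    then show ?thesis unfolding sum.distrib sum_if_mem_const[OF sub(1)] sum_if_mem_const[OF sub(2)] card_I
      by simp
  qed
  have res: "(\<Sum>i<d. (b i - a i)\<^sup>2) = N + real M * (1 - \<alpha>)\<^sup>2"
  proof -
    have "(\<Sum>i<d. (b i - a i)\<^sup>2) =
        (\<Sum>i<d. (if i \<in> {K - M..<k} then 1 else 0) + (if i \<in> {k..<k + M} then (1 - \<alpha>)\<^sup>2 else 0))"
      using M assms(1) by (intro sum.cong) (auto simp: b_def a_def)
    then show ?thesis unfolding sum.distrib sum_if_mem_const[OF sub(1)] sum_if_mem_const[OF sub(2)] card_I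
      by simp
  qed
  have "\<alpha>\<^sup>2 - (1 + t) * (1 - \<alpha>)\<^sup>2 = (1 + t) / t"
    using t_pos by (simp add: \<alpha>_def field_simps power2_eq_square)
  moreover have "real M * ((1 + t) / t) = N * t"
    using ht_nu_sq[of d K k] \<rho> N_pos t_pos by (simp add: t_def field_simps power2_eq_square)
  ultimately have "N + real M * \<alpha>\<^sup>2 = (1 + t) * (N + real M * (1 - \<alpha>)\<^sup>2)"
    by (simp add: algebra_simps)
  then have "l2norm d (\<lambda>i. hard_threshold d k b i - a i) = sqrt (ht_nu d K k) * l2norm d (\<lambda>i. b i - a i)"
    unfolding l2norm_def err res by (simp add: t_def real_sqrt_mult)
  then show ?thesis using sparse witness by blast
qed

theorem theorem1:
  fixes d K k :: nat
  assumes "0 < d" and "K \<le> k" and "k \<le> d"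
  shows "(\<forall>a b. is_sparse d K a \<longrightarrow>
            l2norm d (\<lambda>i. hard_threshold d k b i - a i)
              \<le> sqrt (ht_nu d K k) * l2norm d (\<lambda>i. b i - a i))
       \<and> (0 < k \<longrightarrow> (\<exists>a b. is_sparse d K a \<and> (\<exists>i<d. b i \<noteq> a i) \<and>
            l2norm d (\<lambda>i. hard_threshold d k b i - a i)
              = sqrt (ht_nu d K k) * l2norm d (\<lambda>i. b i - a i)))"
proof (intro conjI allI impI)
  fix a b :: "nat \<Rightarrow> real"
  assume "is_sparse d K a"
  from ht_sq_error_le[OF this assms(2,3), of b]
  show "l2norm d (\<lambda>i. hard_threshold d k b i - a i) \<le> sqrt (ht_nu d K k) * l2norm d (\<lambda>i. b i - a i)"
    unfolding l2norm_def real_sqrt_mult[symmetric] by (rule real_sqrt_le_mono)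
next
  assume "0 < k"
  then show "\<exists>a b. is_sparse d K a \<and> (\<exists>i<d. b i \<noteq> a i) \<and>
            l2norm d (\<lambda>i. hard_threshold d k b i - a i)
              = sqrt (ht_nu d K k) * l2norm d (\<lambda>i. b i - a i)"
    using ht_bound_attained_nu_one[OF assms(1)] ht_bound_attained_nu_gt_one[OF assms(2,3)] by blast
qed

end
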